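(* Let $k\ge1$ and $A\in\mathbb{C}^{k\times k}$ with $\|A-\mathbbm{1}_k\|<1/k$. For $\mathbf{z}=(z_1,\ldots,z_k)^T\in\mathbb{C}^k$ put $\mathbf{w}=(w_1,\ldots,w_k)^T=A\mathbf{z}$. Then $w_1\cdots w_k\neq0$ for all $\mathbf{z}\in(\partial D)^k$, and \[ \frac{1}{\det(A)}=\frac{1}{(2\pi i)^k}\oint_{\partial D}\cdots\oint_{\partial D}\frac{1}{w_1\cdots w_k}\,dz_1\cdots dz_k . \]
   Context: $\|\cdot\|$ is the Frobenius norm, $\mathbbm{1}_k$ the identity matrix, $\partial D=\{z\in\mathbb{C}:|z|=1\}$ is the unit circle traversed once counterclockwise, and the integral is the iterated contour integral in each variable $z_j$ over $\partial D$ (i.e. over the torus $(\partial D)^k$). *)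

theory Defs
  imports "HOL-Complex_Analysis.Complex_Analysis" "Jordan_Normal_Form.Determinant"
begin

definition frob_norm :: "complex mat \<Rightarrow> real" where
  "frob_norm M = sqrt (\<Sum>i<dim_row M. \<Sum>j<dim_col M. (cmod (M $$ (i,j)))\<^sup>2)"

text \<open>Coordinates of w = A z, for z given as a function on indices {0..<k}.\<close>
definition wcoord :: "complex mat \<Rightarrow> (nat \<Rightarrow> complex) \<Rightarrow> nat \<Rightarrow> complex" where
  "wcoord A z i = (\<Sum>j<dim_col A. A $$ (i,j) * z j)"

text \<open>Iterated contour integral over the unit circle in the variables z_0,...,z_(n-1);
  the variable z_0 is the innermost integration, z_(n-1) the outermost.\<close>
fun iter_circ_integral :: "nat \<Rightarrow> ((nat \<Rightarrow> complex) \<Rightarrow> complex) \<Rightarrow> (nat \<Rightarrow> complex) \<Rightarrow> complex" where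
  "iter_circ_integral 0 f z = f z"
| "iter_circ_integral (Suc n) f z =
     contour_integral (circlepath 0 1) (\<lambda>t. iter_circ_integral n f (z(n := t)))"

end

theory Submission
  imports Defs
begin

text \<open>The hypothesis makes A strictly diagonally dominant by rows. Integrating first in z_0,
  the integrand has exactly one pole inside the unit disc, where the first coordinate
  w_0 vanishes; the other factors are nonzero on the closed disc by diagonal dominance.
  By Cauchy's formula the inner integral is 2\<pi>i/A_00 times the integrand for the Schur
  complement of A_00, evaluated at (z_1,...,z_(k-1)), since eliminating z_0 from w_0 = 0 turns
  the remaining coordinates into those of the Schur complement. The Schur complement is again
  diagonally dominant and det A = A_00 \<cdot> det (Schur complement), so induction on k finishes.\<close>

definition diag_dominant :: "'a::real_normed_field mat \<Rightarrow> bool" where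
  "diag_dominant A \<longleftrightarrow>
     (\<forall>i<dim_row A. (\<Sum>j\<in>{..<dim_col A} - {i}. norm (A $$ (i,j))) < norm (A $$ (i,i)))"

definition schur_compl :: "'a::field mat \<Rightarrow> 'a mat" where
  "schur_compl A = mat (dim_row A - 1) (dim_col A - 1)
     (\<lambda>(i,j). A $$ (Suc i, Suc j) - A $$ (Suc i, 0) / A $$ (0,0) * A $$ (0, Suc j))"

lemma sum_lessThan_Suc_minus_0:
  "(\<Sum>j\<in>{..<Suc n} - {0}. f j) = (\<Sum>j<n. f (Suc j))"
proof -
  have "{..<Suc n} - {0} = Suc ` {..<n}" by (auto simp: lessThan_Suc_eq_insert_0)
  then show ?thesis by (simp add: sum.reindex)
qed

lemma sum_lessThan_Suc_minus_Suc:
  "(\<Sum>j\<in>{..<Suc n} - {Suc i}. f j) = f 0 + (\<Sum>j\<in>{..<n} - {i}. f (Suc j))"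
proof -
  have "{..<Suc n} - {Suc i} = insert 0 (Suc ` ({..<n} - {i}))"
    by (auto simp: lessThan_Suc_eq_insert_0)
  then show ?thesis by (simp add: sum.reindex)
qed

lemma norm_sum_mult_le:
  fixes a z :: "'i \<Rightarrow> 'a::real_normed_div_algebra"
  assumes "\<And>j. j \<in> J \<Longrightarrow> norm (z j) \<le> 1"
  shows "norm (\<Sum>j\<in>J. a j * z j) \<le> (\<Sum>j\<in>J. norm (a j))"
proof -
  have "norm (\<Sum>j\<in>J. a j * z j) \<le> (\<Sum>j\<in>J. norm (a j * z j))" by (rule norm_sum)
  also have "\<dots> \<le> (\<Sum>j\<in>J. norm (a j))"
    by (rule sum_mono) (use assms in \<open>auto simp: norm_mult intro: mult_left_le\<close>)
  finally show ?thesis .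
qed

lemma norm_sum_mult_ge_diag:
  fixes a z :: "'i \<Rightarrow> 'a::real_normed_div_algebra"
  assumes "finite J" "i \<in> J" "norm (z i) = 1" "\<And>j. j \<in> J \<Longrightarrow> norm (z j) \<le> 1"
  shows "norm (a i) - (\<Sum>j\<in>J - {i}. norm (a j)) \<le> norm (\<Sum>j\<in>J. a j * z j)"
proof -
  have rest: "norm (\<Sum>j\<in>J - {i}. a j * z j) \<le> (\<Sum>j\<in>J - {i}. norm (a j))"
    by (rule norm_sum_mult_le) (use assms in auto)
  have "(\<Sum>j\<in>J. a j * z j) = a i * z i + (\<Sum>j\<in>J - {i}. a j * z j)"
    using assms by (simp add: sum.remove)
  moreover have "norm (a i * z i) - norm (\<Sum>j\<in>J - {i}. a j * z j)
      \<le> norm (a i * z i + (\<Sum>j\<in>J - {i}. a j * z j))"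
    by (rule norm_diff_ineq)
  ultimately show ?thesis using rest assms(3) by (simp add: norm_mult)
qed

lemma off_diag_sum_diff_less:
  fixes r s :: "'i \<Rightarrow> 'a::real_normed_div_algebra"
  assumes "finite J" "i \<in> J"
    and r: "(\<Sum>j\<in>J - {i}. norm (r j)) + norm c * b < norm (r i)"
    and s: "(\<Sum>j\<in>J. norm (s j)) \<le> b"
  shows "(\<Sum>j\<in>J - {i}. norm (r j - c * s j)) < norm (r i - c * s i)"
proof -
  have s_off: "(\<Sum>j\<in>J - {i}. norm (s j)) \<le> b - norm (s i)"
    using s assms(1,2) by (simp add: sum.remove)
  have "(\<Sum>j\<in>J - {i}. norm (r j - c * s j)) \<le> (\<Sum>j\<in>J - {i}. norm (r j) + norm c * norm (s j))"
    by (rule sum_mono) (metis norm_mult norm_triangle_ineq4)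
  also have "\<dots> = (\<Sum>j\<in>J - {i}. norm (r j)) + norm c * (\<Sum>j\<in>J - {i}. norm (s j))"
    by (simp add: sum.distrib sum_distrib_left)
  also have "\<dots> \<le> (\<Sum>j\<in>J - {i}. norm (r j)) + norm c * (b - norm (s i))"
    using s_off by (simp add: mult_left_mono)
  also have "\<dots> < norm (r i) - norm c * norm (s i)"
    using r by (simp add: right_diff_distrib)
  also have "\<dots> \<le> norm (r i - c * s i)"
    by (metis norm_mult norm_triangle_ineq2)
  finally show ?thesis .
qed

lemma wcoord_nonzero:
  assumes A: "A \<in> carrier_mat n n" "diag_dominant A"
    and "i < n" "norm (z i) = 1" "\<And>j. j < n \<Longrightarrow> norm (z j) \<le> 1"
  shows "wcoord A z i \<noteq> 0"
proof -
  have "wcoord A z i = (\<Sum>j\<in>{..<n}. A $$ (i,j) * z j)"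
    using A by (simp add: wcoord_def)
  moreover have "norm (A $$ (i,i)) - (\<Sum>j\<in>{..<n} - {i}. norm (A $$ (i,j)))
      \<le> norm (\<Sum>j\<in>{..<n}. A $$ (i,j) * z j)"
    using assms by (intro norm_sum_mult_ge_diag) auto
  moreover have "(\<Sum>j\<in>{..<n} - {i}. norm (A $$ (i,j))) < norm (A $$ (i,i))"
    using assms by (auto simp: diag_dominant_def)
  ultimately show ?thesis by auto
qed

lemma norm_entry_le_frob_norm:
  assumes "i < dim_row M" "j < dim_col M"
  shows "cmod (M $$ (i,j)) \<le> frob_norm M"
proof -
  have "(cmod (M $$ (i,j)))\<^sup>2 \<le> (\<Sum>j'<dim_col M. (cmod (M $$ (i,j')))\<^sup>2)"
    by (rule member_le_sum) (use assms in auto)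
  also have "\<dots> \<le> (\<Sum>i'<dim_row M. \<Sum>j'<dim_col M. (cmod (M $$ (i',j')))\<^sup>2)"
    by (rule member_le_sum[where f = "\<lambda>i'. \<Sum>j'<dim_col M. (cmod (M $$ (i',j')))\<^sup>2"])
       (use assms in \<open>auto intro: sum_nonneg\<close>)
  finally show ?thesis by (simp add: frob_norm_def real_le_rsqrt)
qed

lemma diag_dominant_if_frob_norm_less:
  assumes A: "A \<in> carrier_mat n n" and frob: "frob_norm (A - 1\<^sub>m n) < 1 / real n"
  shows "diag_dominant A"
  unfolding diag_dominant_def
proof (intro allI impI)
  fix i assume "i < dim_row A"
  with A have i: "i < n" by simp
  define B where "B = A - 1\<^sub>m n"
  have B: "B $$ (i,j) = A $$ (i,j) - (if i = j then 1 else 0)" if "j < n" for j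
    using that i A by (simp add: B_def)
  have "(\<Sum>j<n. cmod (B $$ (i,j))) < (\<Sum>j<n. 1 / real n)"
  proof (rule sum_strict_mono)
    fix j assume "j \<in> {..<n}"
    then have "cmod (B $$ (i,j)) \<le> frob_norm B"
      using i A by (intro norm_entry_le_frob_norm) (auto simp: B_def)
    then show "cmod (B $$ (i,j)) < 1 / real n" using frob B_def by simp
  qed (use i in auto)
  also have "\<dots> = 1" using i by simp
  finally have "cmod (B $$ (i,i)) + (\<Sum>j\<in>{..<n} - {i}. cmod (B $$ (i,j))) < 1"
    using i by (simp add: sum.remove)
  moreover have "(\<Sum>j\<in>{..<n} - {i}. cmod (B $$ (i,j))) = (\<Sum>j\<in>{..<n} - {i}. cmod (A $$ (i,j)))"
    by (rule sum.cong) (auto simp: B)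
  moreover have "1 \<le> cmod (A $$ (i,i)) + cmod (B $$ (i,i))"
    using norm_triangle_ineq4[of "A $$ (i,i)" "B $$ (i,i)"] B[OF i] by simp
  ultimately show "(\<Sum>j\<in>{..<dim_col A} - {i}. cmod (A $$ (i,j))) < cmod (A $$ (i,i))"
    using A by simp
qed

section \<open>The Schur complement of the top left entry\<close>

lemma schur_compl_carrier:
  "A \<in> carrier_mat (Suc n) (Suc n) \<Longrightarrow> schur_compl A \<in> carrier_mat n n"
  by (simp add: schur_compl_def)

lemma schur_compl_index:
  "A \<in> carrier_mat (Suc n) (Suc n) \<Longrightarrow> i < n \<Longrightarrow> j < n \<Longrightarrow>
   schur_compl A $$ (i,j) = A $$ (Suc i, Suc j) - A $$ (Suc i, 0) / A $$ (0,0) * A $$ (0, Suc j)"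
  by (simp add: schur_compl_def)

lemma det_schur_compl:
  fixes A :: "'a::field mat"
  assumes A: "A \<in> carrier_mat (Suc n) (Suc n)" and pivot: "A $$ (0,0) \<noteq> 0"
  shows "det A = A $$ (0,0) * det (schur_compl A)"
proof -
  define a where "a = A $$ (0,0)"
  have a: "a \<noteq> 0" using pivot by (simp add: a_def)
  \<comment> \<open>L subtracts multiples of the first row so as to clear the first column.\<close>
  define L :: "'a mat" where "L = mat (Suc n) (Suc n)
    (\<lambda>(i,j). if i = j then 1 else if j = 0 then - A $$ (i,0) / a else 0)"
  have L: "L \<in> carrier_mat (Suc n) (Suc n)" by (simp add: L_def)
  have "det L = prod_list (diag_mat L)"
    by (rule det_lower_triangular[OF _ L]) (auto simp: L_def)
  also have "diag_mat L = map (\<lambda>_. 1) [0..<Suc n]"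
    by (auto simp: diag_mat_def L_def)
  also have "prod_list \<dots> = 1" by (induction n) auto
  finally have det_L: "det L = 1" .
  define B where "B = L * A"
  have B: "B \<in> carrier_mat (Suc n) (Suc n)" using L A by (simp add: B_def)
  have B_index: "B $$ (i,j) = A $$ (i,j) - (if i = 0 then 0 else A $$ (i,0) / a * A $$ (0,j))"
    if "i < Suc n" "j < Suc n" for i j
  proof -
    have "B $$ (i,j) = (\<Sum>l\<in>{0..<Suc n}. L $$ (i,l) * A $$ (l,j))"
      using that A L by (simp add: B_def scalar_prod_def)
    also have "\<dots> = (\<Sum>l\<in>{0..<Suc n}. (if l = i then A $$ (i,j) else 0) -
        (if l = 0 \<and> i \<noteq> 0 then A $$ (i,0) / a * A $$ (0,j) else 0))"
      by (rule sum.cong) (use that in \<open>auto simp: L_def\<close>)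
    finally show ?thesis using that by (simp add: sum_subtractf)
  qed
  have "det A = det B" unfolding B_def using det_mult[OF L A] det_L by simp
  also have "\<dots> = (\<Sum>i<Suc n. B $$ (i,0) * cofactor B i 0)"
    by (rule laplace_expansion_column[OF B]) simp
  also have "\<dots> = a * det (mat_delete B 0 0)"
    by (subst sum.lessThan_Suc_shift) (simp add: B_index a cofactor_def a_def[symmetric])
  also have "mat_delete B 0 0 = schur_compl A"
    by (rule eq_matI) (use A B in \<open>auto simp: mat_delete_def schur_compl_def B_index a_def\<close>)
  finally show ?thesis by (simp add: a_def)
qed

lemma diag_dominant_diag_nonzero:
  assumes "diag_dominant A" "i < dim_row A"
  shows "A $$ (i,i) \<noteq> 0"
proof -
  have "0 \<le> (\<Sum>j\<in>{..<dim_col A} - {i}. norm (A $$ (i,j)))" by (rule sum_nonneg) simp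
  then show ?thesis using assms by (auto simp: diag_dominant_def)
qed

lemma diag_dominant_first_row:
  assumes "A \<in> carrier_mat (Suc n) (Suc n)" "diag_dominant A"
  shows "(\<Sum>j<n. norm (A $$ (0, Suc j))) < norm (A $$ (0,0))"
proof -
  have "(\<Sum>j\<in>{..<Suc n} - {0}. norm (A $$ (0,j))) < norm (A $$ (0,0))"
    using assms by (auto simp: diag_dominant_def)
  then show ?thesis by (simp add: sum_lessThan_Suc_minus_0)
qed

lemma diag_dominant_schur_compl:
  assumes A: "A \<in> carrier_mat (Suc n) (Suc n)" and dom: "diag_dominant A"
  shows "diag_dominant (schur_compl A)"
  unfolding diag_dominant_def
proof (intro allI impI)
  fix i assume "i < dim_row (schur_compl A)"
  with A have i: "i < n" by (simp add: schur_compl_def)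
  define a where "a = A $$ (0,0)"
  define c where "c = A $$ (Suc i, 0) / a"
  have row_0: "(\<Sum>j<n. norm (A $$ (0, Suc j))) < norm a"
    using diag_dominant_first_row[OF A dom] by (simp add: a_def)
  have "a \<noteq> 0" using diag_dominant_diag_nonzero[OF dom] A by (simp add: a_def)
  then have "norm c * norm a = norm (A $$ (Suc i, 0))" by (simp add: c_def norm_divide)
  moreover have "(\<Sum>j\<in>{..<Suc n} - {Suc i}. norm (A $$ (Suc i, j))) < norm (A $$ (Suc i, Suc i))"
    using dom A i by (auto simp: diag_dominant_def)
  ultimately have row_Suc_i: "(\<Sum>j\<in>{..<n} - {i}. norm (A $$ (Suc i, Suc j))) + norm c * norm a
      < norm (A $$ (Suc i, Suc i))"
    by (simp add: sum_lessThan_Suc_minus_Suc)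
  have "(\<Sum>j\<in>{..<n} - {i}. norm (A $$ (Suc i, Suc j) - c * A $$ (0, Suc j)))
      < norm (A $$ (Suc i, Suc i) - c * A $$ (0, Suc i))"
    using i row_Suc_i row_0 by (intro off_diag_sum_diff_less) auto
  moreover have "schur_compl A $$ (i,j) = A $$ (Suc i, Suc j) - c * A $$ (0, Suc j)"
    if "j < n" for j
    using A i that unfolding c_def a_def by (rule schur_compl_index)
  ultimately show "(\<Sum>j\<in>{..<dim_col (schur_compl A)} - {i}. norm (schur_compl A $$ (i,j)))
      < norm (schur_compl A $$ (i,i))"
    using A i schur_compl_carrier[OF A] by simp
qed

section \<open>Integrating out the innermost variable\<close>

lemma iter_circ_integral_cong:
  assumes "\<And>z. \<forall>j<n. cmod (z j) = 1 \<Longrightarrow> \<forall>j\<ge>n. z j = z0 j \<Longrightarrow> f z = g z"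
  shows "iter_circ_integral n f z0 = iter_circ_integral n g z0"
  using assms
proof (induction n arbitrary: z0)
  case 0
  then show ?case using 0[of z0] by simp
next
  case (Suc n)
  show ?case
    unfolding iter_circ_integral.simps
  proof (rule contour_integral_eq)
    fix t assume "t \<in> path_image (circlepath 0 1)"
    then have t: "cmod t = 1" by (simp add: path_image_circlepath)
    show "iter_circ_integral n f (z0(n := t)) = iter_circ_integral n g (z0(n := t))"
      by (rule Suc.IH) (use Suc.prems t in \<open>auto simp: less_Suc_eq\<close>)
  qed
qed

lemma iter_circ_integral_Suc_inner:
  "iter_circ_integral (Suc n) f z =
   iter_circ_integral n (\<lambda>z'. contour_integral (circlepath 0 1) (\<lambda>t. f (case_nat t z')))
     (\<lambda>j. z (Suc j))"
proof (induction n arbitrary: z)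
  case 0
  have "z(0 := t) = case_nat t (\<lambda>j. z (Suc j))" for t
    by (auto simp: fun_eq_iff split: nat.split)
  then show ?case by simp
next
  case (Suc n)
  have "(\<lambda>j. (z(Suc n := t)) (Suc j)) = (\<lambda>j. z (Suc j))(n := t)" for t
    by (auto simp: fun_eq_iff)
  then show ?case
    by (subst iter_circ_integral.simps, subst Suc.IH) (simp only: iter_circ_integral.simps)
qed

lemma wcoord_case_nat:
  "A \<in> carrier_mat m (Suc n) \<Longrightarrow>
   wcoord A (case_nat t z) i = A $$ (i,0) * t + (\<Sum>j<n. A $$ (i, Suc j) * z j)"
  by (simp add: wcoord_def sum.lessThan_Suc_shift del: sum.lessThan_Suc)

text \<open>Solving the first equation w_0 = 0 for z_0 and substituting into the others
  is Gaussian elimination of the first column.\<close>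

lemma wcoord_schur_compl:
  assumes A: "A \<in> carrier_mat (Suc n) (Suc n)" and pivot: "A $$ (0,0) \<noteq> 0"
    and w0: "wcoord A (case_nat t z) 0 = 0" and i: "i < n"
  shows "wcoord (schur_compl A) z i = wcoord A (case_nat t z) (Suc i)"
proof -
  define b where "b = (\<Sum>j<n. A $$ (0, Suc j) * z j)"
  have t: "t = - b / A $$ (0,0)"
    using w0 pivot wcoord_case_nat[OF A] by (simp add: b_def field_simps add_eq_0_iff)
  have "wcoord (schur_compl A) z i
      = (\<Sum>j<n. A $$ (Suc i, Suc j) * z j - A $$ (Suc i, 0) / A $$ (0,0) * (A $$ (0, Suc j) * z j))"
    using A i schur_compl_carrier[OF A]
    by (auto simp: wcoord_def schur_compl_index algebra_simps intro: sum.cong)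
  also have "\<dots> = A $$ (Suc i, 0) * t + (\<Sum>j<n. A $$ (Suc i, Suc j) * z j)"
    by (simp add: sum_subtractf sum_distrib_left sum_divide_distrib t b_def)
  finally show ?thesis using wcoord_case_nat[OF A] by simp
qed

lemma contour_integral_inverse_prod_wcoord:
  assumes A: "A \<in> carrier_mat (Suc n) (Suc n)" and dom: "diag_dominant A"
    and z: "\<And>j. j < n \<Longrightarrow> cmod (z j) = 1"
  shows "contour_integral (circlepath 0 1) (\<lambda>t. c / (\<Prod>i<Suc n. wcoord A (case_nat t z) i))
       = 2 * of_real pi * \<i> * c / A $$ (0,0) / (\<Prod>i<n. wcoord (schur_compl A) z i)"
proof -
  define a where "a = A $$ (0,0)"
  define p where "p = - (\<Sum>j<n. A $$ (0, Suc j) * z j) / a"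
  define P where "P t = (\<Prod>i<n. wcoord A (case_nat t z) (Suc i))" for t
  define g where "g t = c / (a * P t)" for t
  have row_0: "(\<Sum>j<n. cmod (A $$ (0, Suc j))) < cmod a"
    using diag_dominant_first_row[OF A dom] by (simp add: a_def)
  have a: "a \<noteq> 0" using diag_dominant_diag_nonzero[OF dom] A by (simp add: a_def)
  have "cmod (\<Sum>j<n. A $$ (0, Suc j) * z j) \<le> (\<Sum>j<n. cmod (A $$ (0, Suc j)))"
    by (rule norm_sum_mult_le) (use z in auto)
  with row_0 a have p: "cmod p < 1" by (simp add: p_def norm_divide divide_less_eq)
  have w0: "wcoord A (case_nat t z) 0 = a * (t - p)" for t
    using wcoord_case_nat[OF A] a by (simp add: a_def p_def algebra_simps)
  have "P t \<noteq> 0" if "t \<in> cball 0 1" for t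
  proof -
    have "wcoord A (case_nat t z) (Suc i) \<noteq> 0" if "i < n" for i
      by (rule wcoord_nonzero[OF A dom])
         (use that \<open>t \<in> cball 0 1\<close> z in \<open>auto simp: less_Suc_eq_0_disj\<close>)
    then show ?thesis by (simp add: P_def)
  qed
  moreover have "P = (\<lambda>t. \<Prod>i<n. A $$ (Suc i, 0) * t + (\<Sum>j<n. A $$ (Suc i, Suc j) * z j))"
    by (simp add: P_def wcoord_case_nat[OF A] fun_eq_iff)
  then have "P holomorphic_on cball 0 1" by (simp add: holomorphic_intros)
  ultimately have "g holomorphic_on cball 0 1"
    unfolding g_def using a by (intro holomorphic_intros) auto
  then have cauchy: "((\<lambda>t. g t / (t - p)) has_contour_integral (2 * of_real pi * \<i> * g p))
      (circlepath 0 1)"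
    by (rule Cauchy_integral_circlepath_simple) (simp add: p)
  have integrand: "(\<lambda>t. c / (\<Prod>i<Suc n. wcoord A (case_nat t z) i)) = (\<lambda>t. g t / (t - p))"
    by (simp add: fun_eq_iff prod.lessThan_Suc_shift w0 P_def g_def mult_ac del: prod.lessThan_Suc)
  have P_p: "P p = (\<Prod>i<n. wcoord (schur_compl A) z i)"
    unfolding P_def using wcoord_schur_compl[OF A] a w0 by (simp add: a_def)
  have "contour_integral (circlepath 0 1) (\<lambda>t. c / (\<Prod>i<Suc n. wcoord A (case_nat t z) i))
      = 2 * of_real pi * \<i> * g p"
    unfolding integrand by (rule contour_integral_unique[OF cauchy])
  also have "\<dots> = 2 * of_real pi * \<i> * c / A $$ (0,0) / (\<Prod>i<n. wcoord (schur_compl A) z i)"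
    by (simp add: g_def P_p a_def)
  finally show ?thesis .
qed

lemma iter_circ_integral_inverse_prod_wcoord:
  assumes "A \<in> carrier_mat n n" "diag_dominant A"
  shows "iter_circ_integral n (\<lambda>z. c / (\<Prod>i<n. wcoord A z i)) z0
       = c * (2 * of_real pi * \<i>) ^ n / det A"
  using assms
proof (induction n arbitrary: A c z0)
  case 0
  then have "A = 1\<^sub>m 0" by (intro eq_matI) auto
  then show ?case by simp
next
  case (Suc n)
  note A = Suc.prems(1) and dom = Suc.prems(2)
  define a where "a = A $$ (0,0)"
  have "a \<noteq> 0" using diag_dominant_diag_nonzero[OF dom] A by (simp add: a_def)
  then have det_A: "det A = a * det (schur_compl A)" using det_schur_compl[OF A] by (simp add: a_def)
  have "iter_circ_integral (Suc n) (\<lambda>z. c / (\<Prod>i<Suc n. wcoord A z i)) z0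
     = iter_circ_integral n (\<lambda>z. contour_integral (circlepath 0 1)
         (\<lambda>t. c / (\<Prod>i<Suc n. wcoord A (case_nat t z) i))) (\<lambda>j. z0 (Suc j))"
    by (rule iter_circ_integral_Suc_inner)
  also have "\<dots> = iter_circ_integral n
      (\<lambda>z. (2 * of_real pi * \<i> * c / a) / (\<Prod>i<n. wcoord (schur_compl A) z i)) (\<lambda>j. z0 (Suc j))"
  proof (rule iter_circ_integral_cong)
    fix z assume "\<forall>j<n. cmod (z j) = 1"
    then show "contour_integral (circlepath 0 1) (\<lambda>t. c / (\<Prod>i<Suc n. wcoord A (case_nat t z) i))
        = 2 * of_real pi * \<i> * c / a / (\<Prod>i<n. wcoord (schur_compl A) z i)"
      unfolding a_def by (intro contour_integral_inverse_prod_wcoord[OF A dom]) simp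
  qed
  also have "\<dots> = (2 * of_real pi * \<i> * c / a) * (2 * of_real pi * \<i>) ^ n / det (schur_compl A)"
    by (rule Suc.IH[OF schur_compl_carrier[OF A] diag_dominant_schur_compl[OF A dom]])
  also have "\<dots> = c * (2 * of_real pi * \<i>) ^ Suc n / det A"
    using \<open>a \<noteq> 0\<close> by (simp add: det_A field_simps)
  finally show ?case .
qed

theorem theorem2:
  fixes k :: nat and A :: "complex mat"
  assumes "k \<ge> 1"
    and "A \<in> carrier_mat k k"
    and "frob_norm (A - 1\<^sub>m k) < 1 / real k"
  shows "(\<forall>z. (\<forall>j<k. cmod (z j) = 1) \<longrightarrow> (\<Prod>i<k. wcoord A z i) \<noteq> 0) \<and>
         1 / det A = 1 / (2 * of_real pi * \<i>) ^ k *
           iter_circ_integral k (\<lambda>z. 1 / (\<Prod>i<k. wcoord A z i)) (\<lambda>_. 0)"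
proof
  have dom: "diag_dominant A"
    by (rule diag_dominant_if_frob_norm_less[OF assms(2,3)])
  show "\<forall>z. (\<forall>j<k. cmod (z j) = 1) \<longrightarrow> (\<Prod>i<k. wcoord A z i) \<noteq> 0"
    using wcoord_nonzero[OF assms(2) dom] by simp
  show "1 / det A = 1 / (2 * of_real pi * \<i>) ^ k *
      iter_circ_integral k (\<lambda>z. 1 / (\<Prod>i<k. wcoord A z i)) (\<lambda>_. 0)"
    by (simp add: iter_circ_integral_inverse_prod_wcoord[OF assms(2) dom])
qed

end
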